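(* Fix $N\ge 1$, $L>0$, $\alpha>0$, $p>0$, $\lambda_e>0$ and $\epsilon\in(0,1)$. Let $K_1=\pi\lambda_e\Gamma(\frac{2}{\alpha}+1)$, $K_4=\frac{N\left[(L/N)^\alpha+1\right]}{p}$, and $$R_e^{*}=\log_2\!\left[\frac{2p}{\alpha}\,W_0\!\left(\frac{\alpha}{2}\left[\frac{\ln\frac{1}{1-\epsilon}}{NK_1}\right]^{-\alpha/2}\right)+1\right].$$ Then the function $$\mathbb{U}(R_t)=\frac{(R_t-R_e^* )\exp\!\left[-K_4\left(2^{R_t}-1\right)\right]}{N},\qquad R_t>R_e^*,$$ is quasi-concave with unique maximizer $R_t^*=R_e^*+\frac{1}{\ln2}W_0\!\left(\frac{2^{-R_e^*}}{K_4}\right)$, and consequently the non-on-off-transmission throughput $\mathbb{U}_{\mathrm{NOFT}}=\mathcal{P}_cR_s/N$ is maximized over all $(R_t,R_s)$ with $R_t\ge R_s>0$ and $\mathcal{P}_{\mathrm{so}}\le\epsilon$ by $R_t=R_t^*$ and $$R_s=R_s^*=\frac{1}{\ln2}W_0\!\left(\frac{2^{-R_e^*}}{K_4}\right).$$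
   Context: Setup (linear multihop network). Source and destination are at distance $L$, connected by $N$ equal-length hops of length $L/N$. Fix path-loss exponent $\alpha>0$, transmitter-side SNR $p>0$, eavesdropper density $\lambda_e>0$. Legitimate hop $n$ has received SNR $\mathrm{SNR}_n=\frac{pH_n}{(L/N)^\alpha+1}$ with $H_n$ i.i.d. exponential of mean 1. For each hop $n$, eavesdroppers form independent homogeneous Poisson point processes $\Phi_{ne}$ of intensity $\lambda_e$ on $\mathbb{R}^2$; eavesdropper $e\in\Phi_{ne}$ has SNR $pS_{ne}/(|X_{ne}|^\alpha+1)$, with $|X_{ne}|$ its distance to the hop-$n$ transmitter and $S_{ne}$ i.i.d. Exp(1) independent of everything. Wiretap code rates $R_t\ge R_s>0$, $R_e=R_t-R_s$, $\beta_t=2^{R_t}-1$, $\beta_e=2^{R_e}-1$. The end-to-end secrecy outage probability is $\mathcal{P}_{\mathrm{so}}=\mathbb{P}(\max_n\max_{e\in\Phi_{ne}}\mathrm{SNR}_{ne}>\beta_e)=1-\exp[-NK_1(\beta_e/p)^{-2/\alpha}e^{-\beta_e/p}]$. Non-on-off transmission (NOFT): every hop always transmits; the end-to-end connection probability is $\mathcal{P}_c=\mathbb{P}(\min_n\mathrm{SNR}_n>\beta_t)=\exp[-N\beta_t((L/N)^\alpha+1)/p]$, and the secure transmission throughput is $\mathbb{U}_{\mathrm{NOFT}}=\mathcal{P}_cR_s/N$. $W_0$ denotes the principal branch of the Lambert W function. *)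

theory Defs
  imports "HOL-Analysis.Analysis"
begin

definition lambertW0 :: "real \<Rightarrow> real" where
  "lambertW0 x = (THE w. -1 \<le> w \<and> w * exp w = x)"

definition quasiconcave_on :: "real set \<Rightarrow> (real \<Rightarrow> real) \<Rightarrow> bool" where
  "quasiconcave_on S f \<longleftrightarrow>
     (\<forall>x\<in>S. \<forall>y\<in>S. \<forall>t::real. 0 \<le> t \<and> t \<le> 1 \<longrightarrow>
        (1 - t) *\<^sub>R x + t *\<^sub>R y \<in> S \<longrightarrow> min (f x) (f y) \<le> f ((1 - t) *\<^sub>R x + t *\<^sub>R y))"

definition K1 :: "real \<Rightarrow> real \<Rightarrow> real" where
  "K1 \<alpha> lam_e = pi * lam_e * Gamma (2 / \<alpha> + 1)"

text \<open>End-to-end secrecy outage probability for rates (R_t, R_s).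
  When R_e = R_t - R_s = 0 we have beta_e = 0 and the exponent is infinite, so P_so = 1.\<close>
definition Pso :: "nat \<Rightarrow> real \<Rightarrow> real \<Rightarrow> real \<Rightarrow> real \<Rightarrow> real \<Rightarrow> real" where
  "Pso N \<alpha> p lam_e Rt Rs =
     (let \<beta>e = 2 powr (Rt - Rs) - 1 in
      if \<beta>e = 0 then 1
      else 1 - exp (- (real N * K1 \<alpha> lam_e * (\<beta>e / p) powr (-2 / \<alpha>) * exp (- \<beta>e / p))))"

definition Pc :: "nat \<Rightarrow> real \<Rightarrow> real \<Rightarrow> real \<Rightarrow> real \<Rightarrow> real" where
  "Pc N L \<alpha> p Rt =
     exp (- (real N * (2 powr Rt - 1) * ((L / real N) powr \<alpha> + 1) / p))"

definition U_NOFT :: "nat \<Rightarrow> real \<Rightarrow> real \<Rightarrow> real \<Rightarrow> real \<Rightarrow> real \<Rightarrow> real" where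
  "U_NOFT N L \<alpha> p Rt Rs = Pc N L \<alpha> p Rt * Rs / real N"

end

theory Submission
  imports Defs
begin

text \<open>Since \<open>\<beta> \<mapsto> (\<beta> / p) powr (-2/\<alpha>) * exp (-\<beta> / p)\<close> is strictly decreasing, the secrecy outage
  constraint holds exactly when \<open>Rt - Rs \<ge> Re*\<close>, the Lambert W function solving the boundary
  equation. For fixed \<open>Rt\<close> the throughput grows with \<open>Rs\<close>, so the optimum takes
  \<open>Rs = Rt - Re*\<close> and reduces to maximising \<open>U\<close>. Up to a constant,
  \<open>ln (U x) = ln (x - Re*) - K4 * 2 powr x\<close>, which lies strictly below each of its tangents;
  hence \<open>U\<close> is quasi-concave with its unique maximiser at the zero of the derivative, which is
  again given by the Lambert W function.\<close>

lemma exp_gt_add_one_self: "x \<noteq> 0 \<Longrightarrow> 1 + x < exp (x::real)"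
  using ln_le_minus_one[of "exp x"] ln_eq_minus_one[of "exp x"] by fastforce

lemma lambertW0_pos_and_eq:
  assumes "x > 0"
  shows "lambertW0 x > 0" and "lambertW0 x * exp (lambertW0 x) = x"
proof -
  have "\<exists>w. 0 \<le> w \<and> w \<le> x \<and> w * exp w = x"
    by (intro IVT' continuous_intros) (use assms in auto)
  then obtain w where w: "0 \<le> w" "w * exp w = x" by blast
  have w_pos: "w > 0"
    using w assms by (cases "w = 0") auto
  have "v = w" if "-1 \<le> v" "v * exp v = x" for v
  proof -
    have "0 < v * exp v"
      using that assms by simp
    then have "v > 0"
      by (simp add: zero_less_mult_iff)
    moreover have "strict_mono_on {0<..} (\<lambda>u::real. u * exp u)"
      by (intro strict_mono_onI mult_strict_mono) auto
    ultimately show ?thesis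
      using that w w_pos by (metis greaterThan_iff strict_mono_on_eqD)
  qed
  then have "lambertW0 x = w"
    unfolding lambertW0_def using w by (intro the_equality) auto
  then show "lambertW0 x > 0" "lambertW0 x * exp (lambertW0 x) = x"
    using w w_pos by simp_all
qed

lemma powr_gt_tangent:
  fixes b a y :: real
  assumes "b > 0" "b \<noteq> 1" "y \<noteq> a"
  shows "b powr a * (1 + (y - a) * ln b) < b powr y"
proof -
  have "b powr y = b powr a * exp ((y - a) * ln b)"
    using assms by (simp add: powr_def algebra_simps flip: exp_add)
  moreover have "(y - a) * ln b \<noteq> 0"
    using assms by simp
  ultimately show ?thesis
    using assms by (simp add: exp_gt_add_one_self)
qed

lemma ln_le_tangent:
  fixes a y :: real
  assumes "a > 0" "y > 0"
  shows "ln y \<le> ln a + (y - a) / a"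
  using ln_le_minus_one[of "y / a"] assms by (simp add: ln_div diff_divide_distrib)

text \<open>\<open>log_gain R K x\<close> is \<open>ln ((x - R) * exp (- K * (2 powr x - 1)))\<close> up to the constant \<open>K\<close>,
  and \<open>log_gain_slope\<close> is its derivative.\<close>

definition log_gain :: "real \<Rightarrow> real \<Rightarrow> real \<Rightarrow> real" where
  "log_gain R K x = ln (x - R) - K * 2 powr x"

definition log_gain_slope :: "real \<Rightarrow> real \<Rightarrow> real \<Rightarrow> real" where
  "log_gain_slope R K x = 1 / (x - R) - K * 2 powr x * ln 2"

lemma log_gain_less_tangent:
  assumes "R < a" "R < y" "K > 0" "y \<noteq> a"
  shows "log_gain R K y < log_gain R K a + (y - a) * log_gain_slope R K a"
proof -
  have "ln (y - R) \<le> ln (a - R) + (y - a) / (a - R)"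
    using ln_le_tangent[of "a - R" "y - R"] assms by simp
  moreover have "K * (2 powr a * (1 + (y - a) * ln 2)) < K * 2 powr y"
    using powr_gt_tangent[of 2 y a] assms by simp
  ultimately show ?thesis
    unfolding log_gain_def log_gain_slope_def by (simp add: algebra_simps)
qed

lemma log_gain_le_tangent:
  assumes "R < a" "R < y" "K > 0"
  shows "log_gain R K y \<le> log_gain R K a + (y - a) * log_gain_slope R K a"
  using log_gain_less_tangent[OF assms] by (cases "y = a") auto

lemma quasiconcave_on_below_tangents:
  assumes "\<And>z. z \<in> S \<Longrightarrow> \<exists>D. \<forall>x\<in>S. f x \<le> f z + (x - z) * D"
  shows "quasiconcave_on S f"
  unfolding quasiconcave_on_def
proof (intro ballI allI impI)
  fix x y t :: real
  assume "x \<in> S" "y \<in> S" and t: "0 \<le> t \<and> t \<le> 1" and "(1 - t) *\<^sub>R x + t *\<^sub>R y \<in> S"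
  define z where "z = (1 - t) * x + t * y"
  obtain D where D: "\<forall>u\<in>S. f u \<le> f z + (u - z) * D"
    using assms \<open>(1 - t) *\<^sub>R x + t *\<^sub>R y \<in> S\<close> by (auto simp: z_def)
  have "min (f x) (f y) = (1 - t) * min (f x) (f y) + t * min (f x) (f y)"
    by (simp add: algebra_simps)
  also have "\<dots> \<le> (1 - t) * f x + t * f y"
    using t by (intro add_mono mult_left_mono) auto
  also have "\<dots> \<le> (1 - t) * (f z + (x - z) * D) + t * (f z + (y - z) * D)"
    using t D \<open>x \<in> S\<close> \<open>y \<in> S\<close> by (intro add_mono mult_left_mono) auto
  also have "\<dots> = f z"
    by (simp add: z_def algebra_simps)
  finally show "min (f x) (f y) \<le> f ((1 - t) *\<^sub>R x + t *\<^sub>R y)"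
    by (simp add: z_def)
qed

lemma quasiconcave_on_mono_comp:
  assumes "quasiconcave_on S f" "mono g" "\<And>x. x \<in> S \<Longrightarrow> h x = g (f x)"
  shows "quasiconcave_on S h"
  using assms unfolding quasiconcave_on_def
  by (smt (verit, best) monoD)

lemma quasiconcave_on_log_gain:
  assumes "K > 0"
  shows "quasiconcave_on {R<..} (log_gain R K)"
  using log_gain_le_tangent[OF _ _ assms] by (intro quasiconcave_on_below_tangents) blast

lemma log_gain_slope_lambertW0:
  assumes "K > 0"
  shows "log_gain_slope R K (R + lambertW0 (2 powr (-R) / K) / ln 2) = 0"
proof -
  define w where "w = lambertW0 (2 powr (-R) / K)"
  have w: "w > 0" "w * exp w = 2 powr (-R) / K"
    using lambertW0_pos_and_eq[of "2 powr (-R) / K"] assms by (simp_all add: w_def)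
  have "2 powr (R + w / ln 2) = 2 powr R * exp w"
    by (simp add: powr_def distrib_right flip: exp_add)
  also have "\<dots> = 1 / (K * w)"
    using w assms by (simp add: field_simps powr_minus)
  finally show ?thesis
    using w assms by (simp add: log_gain_slope_def flip: w_def)
qed

lemma log_gain_strict_max:
  assumes "K > 0" "R < y" "y \<noteq> R + lambertW0 (2 powr (-R) / K) / ln 2"
  shows "log_gain R K y < log_gain R K (R + lambertW0 (2 powr (-R) / K) / ln 2)"
proof -
  have "R < R + lambertW0 (2 powr (-R) / K) / ln 2"
    using lambertW0_pos_and_eq(1)[of "2 powr (-R) / K"] assms by simp
  then show ?thesis
    using log_gain_less_tangent[OF _ assms(2,1,3)] log_gain_slope_lambertW0[OF assms(1)] by simp
qed

lemma throughput_eq_exp_log_gain: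
  assumes "R < x"
  shows "(x - R) * exp (- K * (2 powr x - 1)) / c = exp (log_gain R K x) * (exp K / c)"
  using assms by (simp add: log_gain_def exp_diff algebra_simps flip: exp_add)

lemma quasiconcave_on_throughput:
  assumes "K > 0" "c > 0"
  shows "quasiconcave_on {R<..} (\<lambda>x. (x - R) * exp (- K * (2 powr x - 1)) / c)"
proof (rule quasiconcave_on_mono_comp[OF quasiconcave_on_log_gain[OF assms(1)]])
  show "mono (\<lambda>v. exp v * (exp K / c))"
    using assms(2) by (intro monoI mult_right_mono) simp_all
qed (use throughput_eq_exp_log_gain in simp)

lemma throughput_strict_max:
  assumes "K > 0" "c > 0" "R < x" "x \<noteq> R + lambertW0 (2 powr (-R) / K) / ln 2"
  defines "x_opt \<equiv> R + lambertW0 (2 powr (-R) / K) / ln 2"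
  shows "(x - R) * exp (- K * (2 powr x - 1)) / c < (x_opt - R) * exp (- K * (2 powr x_opt - 1)) / c"
proof -
  have "R < x_opt"
    using lambertW0_pos_and_eq(1)[of "2 powr (-R) / K"] assms(1) by (simp add: x_opt_def)
  moreover have "exp (log_gain R K x) < exp (log_gain R K x_opt)"
    using log_gain_strict_max[OF assms(1,3,4)] by (simp add: x_opt_def)
  ultimately show ?thesis
    unfolding throughput_eq_exp_log_gain[OF assms(3)] throughput_eq_exp_log_gain[OF \<open>R < x_opt\<close>]
    using assms(2) by (intro mult_strict_right_mono) simp_all
qed

definition eavesdropper_exponent :: "real \<Rightarrow> real \<Rightarrow> real \<Rightarrow> real" where
  "eavesdropper_exponent \<alpha> p \<beta> = (\<beta> / p) powr (-2 / \<alpha>) * exp (- \<beta> / p)"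

lemma eavesdropper_exponent_strict_antimono:
  assumes "\<alpha> > 0" "p > 0" "0 < \<beta>" "\<beta> < \<beta>'"
  shows "eavesdropper_exponent \<alpha> p \<beta>' < eavesdropper_exponent \<alpha> p \<beta>"
proof -
  have "(\<beta>' / p) powr (-2 / \<alpha>) < (\<beta> / p) powr (-2 / \<alpha>)"
    using assms by (intro powr_less_mono2_neg) (auto simp: divide_strict_right_mono)
  moreover have "exp (- \<beta>' / p) < exp (- \<beta> / p)"
    using assms by (simp add: divide_strict_right_mono)
  ultimately show ?thesis
    unfolding eavesdropper_exponent_def using assms by (intro mult_strict_mono) auto
qed

lemma eavesdropper_exponent_le_iff:
  assumes "\<alpha> > 0" "p > 0" "\<beta> > 0" "\<beta>' > 0"
  shows "eavesdropper_exponent \<alpha> p \<beta> \<le> eavesdropper_exponent \<alpha> p \<beta>' \<longleftrightarrow> \<beta>' \<le> \<beta>"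
  using eavesdropper_exponent_strict_antimono[OF assms(1,2)] assms(3,4)
  by (metis linorder_not_le order_less_imp_le order.strict_iff_order)

lemma eavesdropper_exponent_lambertW0:
  assumes "\<alpha> > 0" "p > 0" "d > 0"
  shows "eavesdropper_exponent \<alpha> p (2 * p / \<alpha> * lambertW0 (\<alpha> / 2 * d powr (- \<alpha> / 2))) = d"
proof -
  define w where "w = lambertW0 (\<alpha> / 2 * d powr (- \<alpha> / 2))"
  have w: "w > 0" "w * exp w = \<alpha> / 2 * d powr (- \<alpha> / 2)"
    using lambertW0_pos_and_eq[of "\<alpha> / 2 * d powr (- \<alpha> / 2)"] assms by (simp_all add: w_def)
  have "(2 * w / \<alpha>) powr (-2 / \<alpha>) * exp (-2 * w / \<alpha>) = (2 * w / \<alpha> * exp w) powr (-2 / \<alpha>)"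
    by (simp only: powr_mult) (simp add: powr_def[of "exp w"])
  also have "2 * w / \<alpha> * exp w = d powr (- \<alpha> / 2)"
    using w assms by (simp add: field_simps)
  also have "(d powr (- \<alpha> / 2)) powr (-2 / \<alpha>) = d"
    using assms by (simp add: powr_powr)
  finally show ?thesis
    unfolding eavesdropper_exponent_def w_def[symmetric] using assms by simp
qed

lemma K1_pos: "\<alpha> > 0 \<Longrightarrow> lam_e > 0 \<Longrightarrow> K1 \<alpha> lam_e > 0"
  unfolding K1_def by (intro mult_pos_pos Gamma_real_pos) (auto intro: add_pos_pos)

lemma one_minus_exp_le_iff:
  fixes X \<epsilon> :: real
  assumes "\<epsilon> < 1"
  shows "1 - exp (- X) \<le> \<epsilon> \<longleftrightarrow> X \<le> ln (1 / (1 - \<epsilon>))"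
proof -
  have "1 - exp (- X) \<le> \<epsilon> \<longleftrightarrow> exp (ln (1 - \<epsilon>)) \<le> exp (- X)"
    using assms by auto
  also have "\<dots> \<longleftrightarrow> ln (1 - \<epsilon>) \<le> - X"
    by (rule exp_le_cancel_iff)
  also have "\<dots> \<longleftrightarrow> X \<le> ln (1 / (1 - \<epsilon>))"
    using assms by (auto simp: ln_div)
  finally show ?thesis .
qed

definition beta_e_threshold :: "nat \<Rightarrow> real \<Rightarrow> real \<Rightarrow> real \<Rightarrow> real \<Rightarrow> real" where
  "beta_e_threshold N \<alpha> p lam_e \<epsilon> =
     2 * p / \<alpha> * lambertW0 (\<alpha> / 2 * (ln (1 / (1 - \<epsilon>)) / (real N * K1 \<alpha> lam_e)) powr (- \<alpha> / 2))"

context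
  fixes N :: nat and \<alpha> p lam_e \<epsilon> :: real
  assumes N: "N \<ge> 1" and \<alpha>: "\<alpha> > 0" and p: "p > 0" and lam_e: "lam_e > 0"
    and \<epsilon>: "0 < \<epsilon>" "\<epsilon> < 1"
begin

lemma outage_budget_pos: "ln (1 / (1 - \<epsilon>)) / (real N * K1 \<alpha> lam_e) > 0"
  using N \<epsilon> K1_pos[OF \<alpha> lam_e] by simp

lemma beta_e_threshold_pos: "beta_e_threshold N \<alpha> p lam_e \<epsilon> > 0"
  unfolding beta_e_threshold_def
  using outage_budget_pos \<alpha> p
  by (intro mult_pos_pos lambertW0_pos_and_eq(1)) (simp_all only: powr_gt_zero, simp_all)

lemma eavesdropper_exponent_beta_e_threshold:
  "real N * K1 \<alpha> lam_e * eavesdropper_exponent \<alpha> p (beta_e_threshold N \<alpha> p lam_e \<epsilon>)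
     = ln (1 / (1 - \<epsilon>))"
  using eavesdropper_exponent_lambertW0[OF \<alpha> p outage_budget_pos] N K1_pos[OF \<alpha> lam_e]
  by (simp add: beta_e_threshold_def)

lemma Pso_le_iff:
  assumes "Rs \<le> Rt"
  shows "Pso N \<alpha> p lam_e Rt Rs \<le> \<epsilon> \<longleftrightarrow> log 2 (beta_e_threshold N \<alpha> p lam_e \<epsilon> + 1) \<le> Rt - Rs"
proof (cases "Rt = Rs")
  case True
  then show ?thesis
    using beta_e_threshold_pos \<epsilon> by (simp add: Pso_def log_le_iff)
next
  case False
  define \<beta> where "\<beta> = 2 powr (Rt - Rs) - 1"
  have "\<beta> > 0"
    using False assms by (simp add: \<beta>_def)
  have "Pso N \<alpha> p lam_e Rt Rs = 1 - exp (- (real N * K1 \<alpha> lam_e * eavesdropper_exponent \<alpha> p \<beta>))"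
    using \<open>\<beta> > 0\<close> by (simp add: Pso_def eavesdropper_exponent_def mult.assoc flip: \<beta>_def)
  then have "Pso N \<alpha> p lam_e Rt Rs \<le> \<epsilon> \<longleftrightarrow> real N * K1 \<alpha> lam_e * eavesdropper_exponent \<alpha> p \<beta>
      \<le> real N * K1 \<alpha> lam_e * eavesdropper_exponent \<alpha> p (beta_e_threshold N \<alpha> p lam_e \<epsilon>)"
    using one_minus_exp_le_iff[OF \<epsilon>(2)] eavesdropper_exponent_beta_e_threshold by simp
  also have "\<dots> \<longleftrightarrow>
      eavesdropper_exponent \<alpha> p \<beta> \<le> eavesdropper_exponent \<alpha> p (beta_e_threshold N \<alpha> p lam_e \<epsilon>)"
    using N K1_pos[OF \<alpha> lam_e] by (intro mult_le_cancel_left_pos) simp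
  also have "\<dots> \<longleftrightarrow> beta_e_threshold N \<alpha> p lam_e \<epsilon> \<le> \<beta>"
    using eavesdropper_exponent_le_iff[OF \<alpha> p \<open>\<beta> > 0\<close> beta_e_threshold_pos] .
  also have "\<dots> \<longleftrightarrow> log 2 (beta_e_threshold N \<alpha> p lam_e \<epsilon> + 1) \<le> Rt - Rs"
    using beta_e_threshold_pos by (subst log_le_iff) (auto simp: \<beta>_def)
  finally show ?thesis .
qed

end

lemma U_NOFT_eq:
  "U_NOFT N L \<alpha> p Rt Rs = Rs * exp (- (real N * ((L / real N) powr \<alpha> + 1) / p) * (2 powr Rt - 1)) / real N"
  by (simp add: U_NOFT_def Pc_def)

theorem theorem3:
  fixes N :: nat and L \<alpha> p lam_e \<epsilon> :: real
  assumes "N \<ge> 1" "L > 0" "\<alpha> > 0" "p > 0" "lam_e > 0" "0 < \<epsilon>" "\<epsilon> < 1"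
  defines "K4 \<equiv> real N * ((L / real N) powr \<alpha> + 1) / p"
  defines "Re_opt \<equiv> log 2 (2 * p / \<alpha> *
             lambertW0 (\<alpha> / 2 * (ln (1 / (1 - \<epsilon>)) / (real N * K1 \<alpha> lam_e)) powr (- \<alpha> / 2)) + 1)"
  defines "U \<equiv> (\<lambda>Rt. (Rt - Re_opt) * exp (- K4 * (2 powr Rt - 1)) / real N)"
  defines "Rs_opt \<equiv> lambertW0 (2 powr (- Re_opt) / K4) / ln 2"
  defines "Rt_opt \<equiv> Re_opt + Rs_opt"
  shows "quasiconcave_on {Re_opt<..} U
       \<and> Rt_opt > Re_opt
       \<and> (\<forall>Rt>Re_opt. Rt \<noteq> Rt_opt \<longrightarrow> U Rt < U Rt_opt)
       \<and> (Rt_opt \<ge> Rs_opt \<and> Rs_opt > 0 \<and> Pso N \<alpha> p lam_e Rt_opt Rs_opt \<le> \<epsilon>)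
       \<and> (\<forall>Rt Rs. Rt \<ge> Rs \<and> Rs > 0 \<and> Pso N \<alpha> p lam_e Rt Rs \<le> \<epsilon> \<longrightarrow>
              U_NOFT N L \<alpha> p Rt Rs \<le> U_NOFT N L \<alpha> p Rt_opt Rs_opt)"
proof -
  have K4: "K4 > 0"
    unfolding K4_def using assms by (simp add: add_nonneg_pos)
  have feasible_iff: "Pso N \<alpha> p lam_e Rt Rs \<le> \<epsilon> \<longleftrightarrow> Re_opt \<le> Rt - Rs" if "Rs \<le> Rt" for Rt Rs
    using Pso_le_iff[OF assms(1,3,4,5,6,7) that] by (simp add: Re_opt_def beta_e_threshold_def)
  have "Re_opt > 0"
    using beta_e_threshold_pos[OF assms(1,3,4,5,6,7)] by (simp add: Re_opt_def beta_e_threshold_def)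
  have "Rs_opt > 0"
    using lambertW0_pos_and_eq(1) K4 by (simp add: Rs_opt_def)
  have U_max: "U x < U Rt_opt" if "x > Re_opt" "x \<noteq> Rt_opt" for x
    using throughput_strict_max[OF K4 _ that(1)] that assms(1) by (simp add: U_def Rt_opt_def Rs_opt_def)
  have "quasiconcave_on {Re_opt<..} U"
    using quasiconcave_on_throughput[OF K4] assms(1) by (simp add: U_def)
  moreover have "U_NOFT N L \<alpha> p Rt Rs \<le> U_NOFT N L \<alpha> p Rt_opt Rs_opt"
    if "Rt \<ge> Rs" "Rs > 0" "Pso N \<alpha> p lam_e Rt Rs \<le> \<epsilon>" for Rt Rs
  proof -
    have "Rs \<le> Rt - Re_opt"
      using feasible_iff that by simp
    then have "U_NOFT N L \<alpha> p Rt Rs \<le> U Rt"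
      unfolding U_NOFT_eq U_def K4_def[symmetric] by (intro divide_right_mono mult_right_mono) auto
    also have "\<dots> \<le> U Rt_opt"
      using U_max[of Rt] \<open>Rs \<le> Rt - Re_opt\<close> \<open>Rs > 0\<close> by (cases "Rt = Rt_opt") auto
    finally show ?thesis
      by (simp add: U_NOFT_eq U_def Rt_opt_def flip: K4_def)
  qed
  ultimately show ?thesis
    using U_max feasible_iff \<open>Re_opt > 0\<close> \<open>Rs_opt > 0\<close> by (auto simp: Rt_opt_def)
qed

end
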